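(* Let $c>0$, $\beta\in[0,1)$, $a>0$ and $n\in\mathbb{N}$ with $n>3c$. Let $f\in C_{\rho_0}(\mathbb{R}^+)$, with $M_f$ a constant such that $|f(x)|\le M_f(1+x^2)$ for all $x\ge0$, and let $\omega_{a+1}(f,\delta)$ be its modulus of continuity on $[0,a+1]$. Then for every $x\in[0,a]$, $$|\mathcal{D}_{n,c}^{\beta}(f,x)-f(x)|\le 6M_f(1+a^2)\,\mu_{2,n,c}^{\beta}(x)+2\,\omega_{a+1}\Big(f,\sqrt{\mu_{2,n,c}^{\beta}(x)}\Big).$$
   Context: For $\beta\in[0,1)$, $x\ge 0$, $n\in\mathbb{N}$ and integers $v\ge0$ let $\omega_\beta(v,nx)=nx(nx+v\beta)^{v-1}\frac{e^{-(nx+v\beta)}}{v!}$. For $c>0$, integers $v\ge1$ and $t\ge0$ let $p_{n,v-1,c}(t)=c\,\frac{\Gamma(n/c+v-1)}{\Gamma(v)\Gamma(n/c)}\cdot\frac{(ct)^{v-1}}{(1+ct)^{n/c+v-1}}$. The modified Jain-Baskakov operators are $$\mathcal{D}_{n,c}^{\beta}(f,x)=\frac{n-c}{c}\sum_{v=1}^{\infty}\omega_\beta(v,nx)\int_0^\infty p_{n,v-1,c}(t)f(t)\,dt+e^{-nx}f(0).$$ $\mu_{2,n,c}^{\beta}(x)=\mathcal{D}_{n,c}^{\beta}((t-x)^2,x)$, the operator applied to $t\mapsto(t-x)^2$ evaluated at $x$. With $\rho_0(x)=1+x^2$, $B_{\rho_0}(\mathbb{R}^+)$ is the set of functions $f$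 on $[0,\infty)$ with $|f(x)|\le M_f(1+x^2)$ for some constant $M_f$, and $C_{\rho_0}(\mathbb{R}^+)$ is the set of continuous $f\in B_{\rho_0}(\mathbb{R}^+)$ such that $f(x)/\rho_0(x)$ converges as $x\to\infty$. $\omega_{a+1}(f,\delta)=\sup\{|f(t)-f(x)|: x,t\in[0,a+1],\ |t-x|\le\delta\}$. *)

theory Defs
  imports "HOL-Analysis.Analysis"
begin

definition omega_beta :: "real \<Rightarrow> nat \<Rightarrow> real \<Rightarrow> real" where
  "omega_beta \<beta> v y = y * (y + real v * \<beta>) ^ (v - 1) * exp (- (y + real v * \<beta>)) / fact v"

(* p_{n,v-1,c}(t), with the index v >= 1 given as the argument v *)
definition p_kernel :: "nat \<Rightarrow> nat \<Rightarrow> real \<Rightarrow> real \<Rightarrow> real" where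
  "p_kernel n v c t = c * Gamma (real n / c + real v - 1) / (Gamma (real v) * Gamma (real n / c))
      * (c * t) ^ (v - 1) / (1 + c * t) powr (real n / c + real v - 1)"

definition jain_baskakov :: "nat \<Rightarrow> real \<Rightarrow> real \<Rightarrow> (real \<Rightarrow> real) \<Rightarrow> real \<Rightarrow> real" where
  "jain_baskakov n c \<beta> f x =
     (real n - c) / c * (\<Sum>k. omega_beta \<beta> (Suc k) (real n * x) *
        (LINT t:{0..}|lborel. p_kernel n (Suc k) c t * f t))
     + exp (- (real n * x)) * f 0"

definition mu2 :: "nat \<Rightarrow> real \<Rightarrow> real \<Rightarrow> real \<Rightarrow> real" where
  "mu2 n c \<beta> x = jain_baskakov n c \<beta> (\<lambda>t. (t - x)^2) x"

definition B_rho0 :: "(real \<Rightarrow> real) set" where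
  "B_rho0 = {f. \<exists>M. \<forall>x\<ge>0. \<bar>f x\<bar> \<le> M * (1 + x^2)}"

definition C_rho0 :: "(real \<Rightarrow> real) set" where
  "C_rho0 = {f. f \<in> B_rho0 \<and> continuous_on {0..} f \<and>
     (\<exists>L. ((\<lambda>x. f x / (1 + x^2)) \<longlongrightarrow> L) at_top)}"

definition modulus_cont :: "real \<Rightarrow> (real \<Rightarrow> real) \<Rightarrow> real \<Rightarrow> real" where
  "modulus_cont b f \<delta> = Sup {\<bar>f t - f x\<bar> | x t. x \<in> {0..b} \<and> t \<in> {0..b} \<and> \<bar>t - x\<bar> \<le> \<delta>}"

end

theory Submission
  imports Defs "HOL-Real_Asymp.Real_Asymp"
begin

text \<open>
  On \<open>C_rho0\<close> the operator \<open>jain_baskakov n c \<beta>\<close> (evaluated at a point \<open>x \<ge> 0\<close>) is a positive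
  linear functional that reproduces constants. Positivity and linearity come from the nonnegativity
  of the weights and kernels together with the finiteness of their second moments: the kernel
  \<open>p_kernel n v c\<close> is a Beta-type density whose second moment is \<open>O(v\<^sup>2)\<close> when \<open>3 c < n\<close>, and the
  weights \<open>omega_beta \<beta> v y\<close> have finite second moments by Jain's identity, the exponential limit of
  Abel's generalisation of the binomial theorem. Reproduction of constants is also Jain's identity.

  For \<open>x \<in> [0, a]\<close> and \<open>\<delta> > 0\<close> one has pointwise on \<open>[0, \<infinity>)\<close>
  \<open>\<bar>f t - f x\<bar> \<le> 6 M (1 + a\<^sup>2) (t - x)\<^sup>2 + (1 + (t - x)\<^sup>2 / \<delta>\<^sup>2) \<omega>(f, \<delta>)\<close>: for \<open>t \<le> a + 1\<close> by
  subadditivity of the modulus of continuity, and for \<open>t > a + 1\<close> by the quadratic growth of \<open>f\<close>.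
  Applying the positive linear functional and choosing \<open>\<delta>\<^sup>2 = \<mu>\<^sub>2(x)\<close> gives the estimate.
\<close>

section \<open>Abel's and Jain's identities\<close>

definition abel_poly :: "real \<Rightarrow> nat \<Rightarrow> real \<Rightarrow> real" where
  "abel_poly z k x = (if k = 0 then 1 else x * (x + real k * z) ^ (k - 1))"

lemma abel_poly_nonneg: "0 \<le> z \<Longrightarrow> 0 \<le> x \<Longrightarrow> 0 \<le> abel_poly z k x"
  by (simp add: abel_poly_def)

lemma has_real_derivative_abel_poly:
  "(abel_poly z (Suc k) has_real_derivative real (Suc k) * abel_poly z k (x + z)) (at x)"
proof (cases k)
  case 0
  then show ?thesis unfolding abel_poly_def by (auto intro!: derivative_eq_intros)
next
  case (Suc j)
  show ?thesis unfolding abel_poly_def Suc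
    by (auto intro!: derivative_eq_intros) (cases j, auto simp: algebra_simps)
qed

lemma abel_binomial_identity:
  "(\<Sum>k\<le>N. real (N choose k) * abel_poly z k x * (y - real k * z) ^ (N - k)) = (x + y) ^ N"
proof (induction N arbitrary: x y)
  case 0
  then show ?case by (simp add: abel_poly_def)
next
  case (Suc N)
  define A where "A x = (\<Sum>j\<le>N. real (Suc N choose Suc j) * abel_poly z (Suc j) x
      * ((y - z) - real j * z) ^ (N - j))" for x
  have sum_eq: "(\<Sum>k\<le>Suc N. real (Suc N choose k) * abel_poly z k x * (y - real k * z) ^ (Suc N - k))
      = y ^ Suc N + A x" for x
    unfolding A_def sum.atMost_Suc_shift by (simp add: abel_poly_def algebra_simps)
  have "(A has_real_derivative real (Suc N) * (x + y) ^ N) (at x)" for x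
  proof -
    have "(A has_real_derivative (\<Sum>j\<le>N. real (Suc N choose Suc j)
        * (real (Suc j) * abel_poly z j (x + z)) * ((y - z) - real j * z) ^ (N - j))) (at x)"
      unfolding A_def
      by (intro DERIV_sum DERIV_cmult DERIV_cmult_right has_real_derivative_abel_poly)
    also have "(\<Sum>j\<le>N. real (Suc N choose Suc j) * (real (Suc j) * abel_poly z j (x + z))
        * ((y - z) - real j * z) ^ (N - j))
      = real (Suc N) * (\<Sum>j\<le>N. real (N choose j) * abel_poly z j (x + z) * ((y - z) - real j * z) ^ (N - j))"
    proof (unfold sum_distrib_left, intro sum.cong refl)
      fix j
      have "real (Suc N choose Suc j) * real (Suc j) = real (Suc N) * real (N choose j)"
        by (metis Suc_times_binomial_eq mult.commute of_nat_mult)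
      then show "real (Suc N choose Suc j) * (real (Suc j) * abel_poly z j (x + z)) * ((y - z) - real j * z) ^ (N - j)
        = real (Suc N) * (real (N choose j) * abel_poly z j (x + z) * ((y - z) - real j * z) ^ (N - j))"
        by (simp add: mult_ac)
    qed
    also have "\<dots> = real (Suc N) * (x + y) ^ N"
      using Suc.IH[of "x + z" "y - z"] by simp
    finally show ?thesis .
  qed
  then have "((\<lambda>x. y ^ Suc N + A x - (x + y) ^ Suc N) has_real_derivative 0) (at x)" for x
    by (auto intro!: derivative_eq_intros) (cases N, auto simp: algebra_simps)
  then have "y ^ Suc N + A x - (x + y) ^ Suc N = y ^ Suc N + A 0 - (0 + y) ^ Suc N"
    using DERIV_isconst_all[of "\<lambda>x. y ^ Suc N + A x - (x + y) ^ Suc N" x 0] by blast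
  moreover have "A 0 = 0"
    by (simp add: A_def abel_poly_def)
  ultimately show ?case
    unfolding sum_eq by simp
qed

lemma binomial_div_power_LIMSEQ: "(\<lambda>N. real (N choose k) / real N ^ k) \<longlonglongrightarrow> 1 / fact k"
proof -
  have "(\<lambda>N. (\<Prod>i<k. 1 - real i / real N) / fact k) \<longlonglongrightarrow> (\<Prod>i<k. 1 - 0) / fact k"
    by (intro tendsto_intros lim_const_over_n) auto
  moreover have "\<forall>\<^sub>F N in sequentially. (\<Prod>i<k. 1 - real i / real N) / fact k = real (N choose k) / real N ^ k"
    using eventually_gt_at_top[of 0]
  proof eventually_elim
    case (elim N)
    then show ?case
      by (simp add: binomial_gbinomial gbinomial_prod_rev prod_dividef field_simps atLeast0LessThan fact_nonzero)
  qed
  ultimately show ?thesis by (simp add: tendsto_cong)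
qed

lemma mult_exp_one_minus_less_one:
  fixes b :: real assumes "0 \<le> b" "b < 1" shows "b * exp (1 - b) < 1"
proof (cases "b = 0")
  case False
  then have "ln b < b - 1"
    using assms ln_le_minus_one[of b] ln_eq_minus_one[of b] by fastforce
  then have "exp (ln b + (1 - b)) < exp 0"
    by simp
  then show ?thesis
    using assms False by (simp add: exp_add)
qed simp

lemma summable_power_mult_geometric:
  fixes r :: real assumes "0 \<le> r" "r < 1" shows "summable (\<lambda>k. real k ^ m * r ^ k)"
proof -
  define s where "s = (1 + r) / 2"
  have "s < 1" "r < s" using assms by (auto simp: s_def)
  have "(\<lambda>k. (1 + 1 / real k) ^ m * r) \<longlonglongrightarrow> (1 + 0) ^ m * r"
    by (intro tendsto_intros lim_const_over_n)
  then have "\<forall>\<^sub>F k in sequentially. (1 + 1 / real k) ^ m * r < s"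
    using \<open>r < s\<close> by (intro order_tendstoD) auto
  then obtain K where K: "\<And>k. k \<ge> K \<Longrightarrow> (1 + 1 / real k) ^ m * r < s"
    unfolding eventually_sequentially by blast
  show ?thesis
  proof (rule summable_ratio_test[of s "Suc K"])
    fix k assume "Suc K \<le> k"
    then have k: "k \<ge> K" "k > 0" by auto
    have "real (Suc k) ^ m = (1 + 1 / real k) ^ m * real k ^ m"
      using k by (simp add: power_mult_distrib[symmetric] field_simps)
    then have "norm (real (Suc k) ^ m * r ^ Suc k) = ((1 + 1 / real k) ^ m * r) * (real k ^ m * r ^ k)"
      using assms by (simp add: algebra_simps)
    also have "\<dots> \<le> s * (real k ^ m * r ^ k)"
      using K[OF k(1)] assms by (intro mult_right_mono) auto
    finally show "norm (real (Suc k) ^ m * r ^ Suc k) \<le> s * norm (real k ^ m * r ^ k)"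
      using assms by simp
  qed fact
qed

definition jain_term :: "real \<Rightarrow> real \<Rightarrow> nat \<Rightarrow> real" where
  "jain_term b y k = abel_poly b k y * exp (- (real k * b)) / fact k"

definition jain_majorant :: "real \<Rightarrow> real \<Rightarrow> nat \<Rightarrow> real" where
  "jain_majorant b y k = abel_poly b k y * exp (real k * (1 - b)) / real k ^ k"

lemma jain_term_nonneg: "0 \<le> b \<Longrightarrow> 0 \<le> y \<Longrightarrow> 0 \<le> jain_term b y k"
  by (simp add: jain_term_def abel_poly_nonneg)

lemma jain_majorant_nonneg: "0 \<le> b \<Longrightarrow> 0 \<le> y \<Longrightarrow> 0 \<le> jain_majorant b y k"
  by (simp add: jain_majorant_def abel_poly_nonneg)

text \<open>The \<open>k\<close>-th root of the majorant tends to \<open>b * exp (1 - b) < 1\<close>.\<close>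

lemma summable_power_mult_jain_majorant:
  assumes "0 \<le> b" "b < 1" "0 \<le> y"
  shows "summable (\<lambda>k. real k ^ m * jain_majorant b y k)"
proof -
  define \<rho> where "\<rho> = b * exp (1 - b)"
  have "\<rho> < 1" "0 \<le> \<rho>"
    using mult_exp_one_minus_less_one assms by (auto simp: \<rho>_def)
  define r where "r = (1 + \<rho>) / 2"
  have r: "\<rho> < r" "r < 1" "0 \<le> r" using \<open>\<rho> < 1\<close> \<open>0 \<le> \<rho>\<close> by (auto simp: r_def)
  obtain K :: nat where K: "real K > y * exp (1 - b) / (r - \<rho>)"
    using reals_Archimedean2 by blast
  show ?thesis
  proof (rule summable_comparison_test')
    show "summable (\<lambda>k. real k ^ m * r ^ k)"
      using r by (intro summable_power_mult_geometric) auto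
    fix k assume "k \<ge> Suc K"
    then have k: "real k > y * exp (1 - b) / (r - \<rho>)" "k > 0"
      using K by (auto intro: less_le_trans)
    have "abel_poly b k y \<le> (y + real k * b) ^ k"
    proof -
      obtain j where j: "k = Suc j" using k(2) by (cases k) auto
      have "y * (y + real k * b) ^ j \<le> (y + real k * b) * (y + real k * b) ^ j"
        using assms by (intro mult_right_mono) auto
      then show ?thesis by (simp add: abel_poly_def j)
    qed
    then have "jain_majorant b y k \<le> (y + real k * b) ^ k * exp (real k * (1 - b)) / real k ^ k"
      unfolding jain_majorant_def by (intro divide_right_mono mult_right_mono) auto
    also have "\<dots> = ((y + real k * b) / real k) ^ k * exp (1 - b) ^ k"
      by (simp add: exp_of_nat_mult power_divide)
    also have "\<dots> = ((y / real k + b) * exp (1 - b)) ^ k"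
      using k(2) by (simp add: add_divide_distrib power_mult_distrib)
    also have "\<dots> \<le> r ^ k"
    proof (intro power_mono)
      have "y / real k * exp (1 - b) \<le> r - \<rho>"
        using k r by (simp add: field_simps mult.commute)
      then show "(y / real k + b) * exp (1 - b) \<le> r" by (simp add: \<rho>_def algebra_simps)
    qed (use assms in auto)
    finally show "norm (real k ^ m * jain_majorant b y k) \<le> real k ^ m * r ^ k"
      using jain_majorant_nonneg[OF assms(1,3)] by (simp add: mult_left_mono)
  qed
qed

lemma binomial_mult_powers_le:
  assumes "k \<le> N"
  shows "real (N choose k) * real k ^ k * real (N - k) ^ (N - k) \<le> real N ^ N"
proof -
  have "real (N choose k) * real k ^ k * real (N - k) ^ (N - k)
      \<le> (\<Sum>j\<le>N. real (N choose j) * real k ^ j * real (N - k) ^ (N - j))"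
    by (rule member_le_sum[where f = "\<lambda>j. real (N choose j) * real k ^ j * real (N - k) ^ (N - j)"])
       (use assms in auto)
  also have "\<dots> = (real k + real (N - k)) ^ N"
    by (rule binomial_ring[symmetric])
  finally show ?thesis using assms by simp
qed

lemma power_diff_le_exp:
  assumes "k \<le> N" "0 \<le> b" "b < 1"
  shows "(real N - real k * b) ^ (N - k) \<le> real (N - k) ^ (N - k) * exp (real k * (1 - b))"
proof (cases "N = k")
  case False
  define m where "m = N - k"
  have m: "m > 0" "real N = real m + real k" using False assms by (auto simp: m_def)
  have "(real N - real k * b) ^ (N - k) = real m ^ m * (1 + real k * (1 - b) / real m) ^ m"
    using m by (simp add: m_def field_simps flip: power_mult_distrib)
  also have "\<dots> \<le> real m ^ m * exp (real k * (1 - b))"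
  proof -
    have "0 \<le> real k * (1 - b)" using assms by simp
    then show ?thesis
      using m by (intro mult_left_mono exp_ge_one_plus_x_over_n_power_n) auto
  qed
  finally show ?thesis by (simp add: m_def)
qed (use assms in simp)

text \<open>The terms of Abel's identity at \<open>(y, N)\<close>, divided by \<open>N ^ N\<close>: they sum to \<open>(1 + y / N) ^ N\<close>
  and converge termwise to the terms of Jain's identity.\<close>

definition jain_approx :: "real \<Rightarrow> real \<Rightarrow> nat \<Rightarrow> nat \<Rightarrow> real" where
  "jain_approx b y k N = (if k \<le> N
     then real (N choose k) * abel_poly b k y * (real N - real k * b) ^ (N - k) / real N ^ N else 0)"

lemma jain_approx_bounds:
  assumes "0 \<le> b" "b < 1" "0 \<le> y"
  shows "0 \<le> jain_approx b y k N" "jain_approx b y k N \<le> jain_majorant b y k"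
proof -
  have "0 \<le> jain_approx b y k N \<and> jain_approx b y k N \<le> jain_majorant b y k"
  proof (cases "k \<le> N")
    case True
    have "real k * b \<le> real k" using assms by (simp add: mult_left_le)
    then have A: "0 \<le> real N - real k * b" using True by linarith
    have ab: "0 \<le> abel_poly b k y" using abel_poly_nonneg assms by auto
    have NN: "real N ^ N > 0" by (cases N) auto
    have kk: "real k ^ k > 0" by (cases k) auto
    have "real (N choose k) * (real N - real k * b) ^ (N - k)
        \<le> real (N choose k) * (real (N - k) ^ (N - k) * exp (real k * (1 - b)))"
      using power_diff_le_exp[OF True assms(1,2)] by (intro mult_left_mono) auto
    also have "\<dots> = real (N choose k) * real k ^ k * real (N - k) ^ (N - k) * exp (real k * (1 - b)) / real k ^ k"
      using kk by (simp add: field_simps)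
    also have "\<dots> \<le> real N ^ N * exp (real k * (1 - b)) / real k ^ k"
      using binomial_mult_powers_le[OF True] kk by (intro divide_right_mono mult_right_mono) auto
    finally have key: "real (N choose k) * (real N - real k * b) ^ (N - k)
        \<le> real N ^ N * exp (real k * (1 - b)) / real k ^ k" .
    have nonneg: "0 \<le> jain_approx b y k N"
      using True A ab by (simp add: jain_approx_def)
    have "jain_approx b y k N = abel_poly b k y * (real (N choose k) * (real N - real k * b) ^ (N - k)) / real N ^ N"
      using True by (simp add: jain_approx_def mult_ac)
    also have "\<dots> \<le> abel_poly b k y * (real N ^ N * exp (real k * (1 - b)) / real k ^ k) / real N ^ N"
      using key ab NN by (intro divide_right_mono mult_left_mono) auto
    also have "\<dots> = jain_majorant b y k"
      using NN by (simp add: jain_majorant_def)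
    finally show ?thesis
      using nonneg by blast
  qed (use jain_majorant_nonneg assms in \<open>simp add: jain_approx_def\<close>)
  then show "0 \<le> jain_approx b y k N" "jain_approx b y k N \<le> jain_majorant b y k"
    by auto
qed

lemma jain_approx_LIMSEQ:
  assumes "0 \<le> b" "b < 1"
  shows "(\<lambda>N. jain_approx b y k N) \<longlonglongrightarrow> jain_term b y k"
proof -
  define g where "g N = abel_poly b k y * (real (N choose k) / real N ^ k)
      * (1 + (- (real k * b)) / real N) ^ N * inverse (1 + (- (real k * b)) / real N) ^ k" for N
  have "g \<longlonglongrightarrow> abel_poly b k y * (1 / fact k) * exp (- (real k * b)) * inverse (1 + 0) ^ k"
    unfolding g_def
    by (intro tendsto_intros binomial_div_power_LIMSEQ tendsto_exp_limit_sequentially lim_const_over_n) auto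
  moreover have "\<forall>\<^sub>F N in sequentially. g N = jain_approx b y k N"
    using eventually_gt_at_top[of k]
  proof eventually_elim
    case (elim N)
    define A where "A = real N - real k * b"
    have "real k * b \<le> real k" using assms by (simp add: mult_left_le)
    then have A0: "A > 0" using elim by (simp add: A_def)
    have q: "1 + (- (real k * b)) / real N = A / real N" using elim by (simp add: A_def field_simps)
    have pA: "A ^ N = A ^ (N - k) * A ^ k" using elim by (simp flip: power_add)
    have "g N = abel_poly b k y * real (N choose k) * (A ^ N / (real N ^ k * real N ^ N)) * (real N ^ k / A ^ k)"
      unfolding g_def q using elim A0 by (simp add: power_divide power_inverse field_simps)
    also have "\<dots> = jain_approx b y k N"
      unfolding pA using elim A0 by (simp add: jain_approx_def A_def field_simps)
    finally show ?case .
  qed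
  ultimately show ?thesis
    by (simp add: tendsto_cong jain_term_def)
qed

lemma jain_approx_suminf:
  assumes "N \<ge> 1"
  shows "(\<Sum>k. jain_approx b y k N) = (1 + y / real N) ^ N"
proof -
  have "(\<Sum>k. jain_approx b y k N) = (\<Sum>k\<le>N. jain_approx b y k N)"
    by (rule suminf_finite) (auto simp: jain_approx_def)
  also have "\<dots> = (y + real N) ^ N / real N ^ N"
    using abel_binomial_identity[of N b y "real N"]
    by (simp add: jain_approx_def mult_ac flip: sum_divide_distrib)
  also have "\<dots> = (1 + y / real N) ^ N"
    using assms by (simp add: field_simps flip: power_divide)
  finally show ?thesis .
qed

text \<open>Jain's identity: the exponential limit of Abel's identity, by dominated convergence
  (Tannery's theorem) applied to the rescaled binomial identities above.\<close>

lemma jain_term_sums: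
  assumes "0 \<le> b" "b < 1" "0 \<le> y"
  shows "jain_term b y sums exp y"
proof -
  have "(\<forall>\<^sub>F N in sequentially. summable (\<lambda>k. norm (jain_approx b y k N)))
      \<and> summable (\<lambda>k. norm (jain_term b y k))
      \<and> ((\<lambda>N. \<Sum>k. jain_approx b y k N) \<longlonglongrightarrow> (\<Sum>k. jain_term b y k))"
  proof (rule tannerys_theorem[where M = "jain_majorant b y"])
    show "(\<lambda>N. jain_approx b y k N) \<longlonglongrightarrow> jain_term b y k" for k
      by (rule jain_approx_LIMSEQ[OF assms(1,2)])
    show "\<forall>\<^sub>F (k, N) in at_top \<times>\<^sub>F sequentially. norm (jain_approx b y k N) \<le> jain_majorant b y k"
      by (intro always_eventually) (use jain_approx_bounds[OF assms] in auto)
    show "summable (jain_majorant b y)"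
      using summable_power_mult_jain_majorant[OF assms, of 0] by simp
  qed simp
  then have summable: "summable (jain_term b y)"
    and lim: "(\<lambda>N. \<Sum>k. jain_approx b y k N) \<longlonglongrightarrow> (\<Sum>k. jain_term b y k)"
    using summable_norm_cancel[of "jain_term b y"] by blast+
  have "\<forall>\<^sub>F N in sequentially. (1 + y / real N) ^ N = (\<Sum>k. jain_approx b y k N)"
    using eventually_ge_at_top[of 1] by eventually_elim (simp add: jain_approx_suminf)
  then have "(\<lambda>N. \<Sum>k. jain_approx b y k N) \<longlonglongrightarrow> exp y"
    using tendsto_exp_limit_sequentially[of y] by (simp add: tendsto_cong)
  with lim have "(\<Sum>k. jain_term b y k) = exp y"
    by (rule LIMSEQ_unique)
  then show ?thesis
    using summable_sums[OF summable] by simp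
qed

lemma jain_term_le_majorant:
  assumes "0 \<le> b" "b < 1" "0 \<le> y" shows "jain_term b y k \<le> jain_majorant b y k"
  by (rule LIMSEQ_le_const2[OF jain_approx_LIMSEQ[OF assms(1,2)]])
     (use jain_approx_bounds[OF assms] in auto)


section \<open>The weights\<close>

lemma omega_beta_Suc_eq: "omega_beta b (Suc k) y = exp (- y) * jain_term b y (Suc k)"
proof -
  have "exp (- (y + real (Suc k) * b)) = exp (- y) * exp (- (real (Suc k) * b))"
    by (simp add: exp_add[symmetric])
  then show ?thesis
    unfolding omega_beta_def jain_term_def abel_poly_def by simp
qed

lemma omega_beta_nonneg: "0 \<le> b \<Longrightarrow> 0 \<le> y \<Longrightarrow> 0 \<le> omega_beta b (Suc k) y"
  unfolding omega_beta_Suc_eq using jain_term_nonneg by simp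

lemma omega_beta_sums:
  assumes "0 \<le> b" "b < 1" "0 \<le> y"
  shows "(\<lambda>k. omega_beta b (Suc k) y) sums (1 - exp (- y))"
proof -
  have "(\<lambda>k. jain_term b y (Suc k)) sums (exp y - jain_term b y 0)"
    using jain_term_sums[OF assms] sums_Suc_iff[of "jain_term b y"] by simp
  then have "(\<lambda>k. exp (- y) * jain_term b y (Suc k)) sums (exp (- y) * (exp y - 1))"
    by (intro sums_mult) (simp add: jain_term_def abel_poly_def)
  moreover have "exp (- y) * (exp y - 1) = 1 - exp (- y)"
    by (simp add: right_diff_distrib exp_minus_inverse mult.commute)
  ultimately show ?thesis
    by (simp add: omega_beta_Suc_eq)
qed

lemma summable_omega_beta_second_moment:
  assumes "0 \<le> b" "b < 1" "0 \<le> y"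
  shows "summable (\<lambda>k. omega_beta b (Suc k) y * (real (Suc k) * real (Suc k + 1)))"
proof (rule summable_comparison_test')
  show "summable (\<lambda>k. 2 * exp (- y) * (real (Suc k) ^ 2 * jain_majorant b y (Suc k)))"
    using summable_power_mult_jain_majorant[OF assms, of 2]
      summable_Suc_iff[of "\<lambda>k. real k ^ 2 * jain_majorant b y k"]
    by (simp add: summable_mult)
  fix k :: nat
  have "real (Suc k) * real (Suc k + 1) \<le> 2 * real (Suc k) ^ 2"
    by (simp add: power2_eq_square)
  then have "jain_term b y (Suc k) * (real (Suc k) * real (Suc k + 1))
      \<le> jain_majorant b y (Suc k) * (2 * real (Suc k) ^ 2)"
    using mult_mono[OF jain_term_le_majorant[OF assms]] jain_majorant_nonneg[OF assms(1,3)] by simp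
  moreover have "norm (omega_beta b (Suc k) y * (real (Suc k) * real (Suc k + 1)))
      = exp (- y) * (jain_term b y (Suc k) * (real (Suc k) * real (Suc k + 1)))"
    using jain_term_nonneg[OF assms(1,3)] by (simp add: omega_beta_Suc_eq abs_mult)
  ultimately show "norm (omega_beta b (Suc k) y * (real (Suc k) * real (Suc k + 1)))
      \<le> 2 * exp (- y) * (real (Suc k) ^ 2 * jain_majorant b y (Suc k))"
    by (simp add: mult_ac)
qed

section \<open>Beta integrals and the kernel\<close>

lemma set_integral_FTC_atLeast:
  fixes f F :: "real \<Rightarrow> real"
  assumes f_borel: "f \<in> borel_measurable borel"
    and deriv: "\<And>x. a \<le> x \<Longrightarrow> (F has_real_derivative f x) (at x)"
    and nonneg: "\<And>x. a \<le> x \<Longrightarrow> 0 \<le> f x"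
    and lim: "(F \<longlongrightarrow> T) at_top"
  shows "set_integrable lborel {a..} f" "(LINT x:{a..}|lborel. f x) = T - F a"
proof -
  have "F a \<le> F x" if "a \<le> x" for x
    using deriv nonneg that by (intro DERIV_nonneg_imp_nondecreasing[of a x F]) (auto intro: order_trans)
  then have "F a \<le> T"
    by (intro tendsto_lowerbound[OF lim]) (auto simp: eventually_at_top_linorder)
  have "(\<integral>\<^sup>+x. ennreal (f x * indicator {a..} x) \<partial>lborel) = (\<integral>\<^sup>+x. ennreal (f x) * indicator {a..} x \<partial>lborel)"
    by (intro nn_integral_cong) (simp split: split_indicator)
  also have "\<dots> = ennreal (T - F a)"
    using nn_integral_FTC_atLeast[OF f_borel deriv nonneg lim] by simp
  finally have "has_bochner_integral lborel (\<lambda>x. f x * indicator {a..} x) (T - F a)"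
    using f_borel nonneg \<open>F a \<le> T\<close>
    by (intro has_bochner_integral_nn_integral) (auto simp: indicator_def)
  moreover have "(\<lambda>x. indicator {a..} x *\<^sub>R f x) = (\<lambda>x. f x * indicator {a..} x)"
    by (auto simp: fun_eq_iff)
  ultimately show "set_integrable lborel {a..} f" "(LINT x:{a..}|lborel. f x) = T - F a"
    unfolding set_integrable_def set_lebesgue_integral_def by (simp_all add: has_bochner_integral_iff)
qed

lemma Gamma_plus1_pos: "0 < x \<Longrightarrow> Gamma (x + 1) = x * Gamma (x :: real)"
  by (rule Gamma_plus1) (auto elim!: nonpos_Ints_cases)

text \<open>\<open>beta_coeff s v j\<close> is the binomial coefficient \<open>(s + v - 1) gchoose j\<close>; for integer \<open>v\<close>,
  \<open>(1 + u) powr -(s + v - 1) * beta_poly s v u\<close> is an antiderivative of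
  \<open>u ^ (v - 1) * (1 + u) powr -(s + v)\<close> up to the factor \<open>-v * beta_coeff s v v\<close>.\<close>

definition beta_coeff :: "real \<Rightarrow> nat \<Rightarrow> nat \<Rightarrow> real" where
  "beta_coeff s v j = Gamma (s + real v) / (fact j * Gamma (s + real v - real j))"

definition beta_poly :: "real \<Rightarrow> nat \<Rightarrow> real \<Rightarrow> real" where
  "beta_poly s v u = (\<Sum>j<v. beta_coeff s v j * u ^ j)"

lemma beta_coeff_Suc:
  assumes "0 < s" "j < v"
  shows "real (Suc j) * beta_coeff s v (Suc j) = (s + real v - 1 - real j) * beta_coeff s v j"
proof -
  define z where "z = s + real v - real j - 1"
  have z: "z > 0" using assms by (simp add: z_def)
  have "beta_coeff s v j = Gamma (s + real v) / (fact j * (z * Gamma z))"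
    using Gamma_plus1_pos[OF z] by (simp add: beta_coeff_def z_def)
  moreover have "s + real v - real (Suc j) = z"
    by (simp add: z_def)
  then have "beta_coeff s v (Suc j) = Gamma (s + real v) / ((real (Suc j) * fact j) * Gamma z)"
    unfolding beta_coeff_def by (simp only: fact_Suc of_nat_mult)
  moreover have "s + real v - 1 - real j = z"
    by (simp add: z_def)
  ultimately show ?thesis
    using z by (simp add: field_simps del: of_nat_Suc)
qed

lemma mult_beta_coeff_self:
  assumes "0 < s" "1 \<le> v"
  shows "real v * beta_coeff s v v = Gamma (s + real v) / (Gamma (real v) * Gamma s)"
proof -
  have "Gamma (real v) = fact (v - 1)"
    using assms Gamma_fact[of "v - 1", where 'a = real] by (simp add: of_nat_diff)
  then have "fact v = real v * Gamma (real v)"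
    using assms by (simp add: fact_reduce)
  then show ?thesis
    using assms by (simp add: beta_coeff_def)
qed

lemma beta_poly_ode:
  assumes "0 < s"
  shows "(1 + u) * (\<Sum>j<v. beta_coeff s v j * (real j * u ^ (j - 1))) - (s + real v - 1) * beta_poly s v u
    = - (real v * beta_coeff s v v) * u ^ (v - 1)"
proof -
  define T where "T j = beta_coeff s v j * real j * u ^ (j - 1)" for j
  have "(1 + u) * (beta_coeff s v j * (real j * u ^ (j - 1))) - (s + real v - 1) * (beta_coeff s v j * u ^ j)
      = T j - T (Suc j)" if "j < v" for j
  proof -
    have pow: "real j * (u * u ^ (j - 1)) = real j * u ^ j"
      by (cases j) auto
    have "T (Suc j) = u ^ j * (real (Suc j) * beta_coeff s v (Suc j))"
      by (simp add: T_def mult_ac)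
    then have T_Suc: "T (Suc j) = (s + real v - 1 - real j) * beta_coeff s v j * u ^ j"
      by (simp only: beta_coeff_Suc[OF assms that] mult_ac)
    have "(1 + u) * (beta_coeff s v j * (real j * u ^ (j - 1))) - (s + real v - 1) * (beta_coeff s v j * u ^ j)
        = T j + beta_coeff s v j * (real j * (u * u ^ (j - 1))) - (s + real v - 1) * (beta_coeff s v j * u ^ j)"
      by (simp add: T_def algebra_simps)
    also have "\<dots> = T j - T (Suc j)"
      unfolding pow T_Suc by (simp add: algebra_simps)
    finally show ?thesis .
  qed
  then have "(1 + u) * (\<Sum>j<v. beta_coeff s v j * (real j * u ^ (j - 1))) - (s + real v - 1) * beta_poly s v u
      = (\<Sum>j<v. T j - T (Suc j))"
    by (simp add: beta_poly_def sum_distrib_left flip: sum_subtractf)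
  also have "\<dots> = T 0 - T v"
    by (rule sum_lessThan_telescope')
  finally show ?thesis
    by (simp add: T_def)
qed

lemma has_real_derivative_beta_antideriv:
  assumes "0 < s" "-1 < u"
  shows "((\<lambda>u. (1 + u) powr - (s + real v - 1) * beta_poly s v u) has_real_derivative
      - (real v * beta_coeff s v v) * u ^ (v - 1) * (1 + u) powr - (s + real v)) (at u)"
proof -
  define e where "e = s + real v - 1"
  define P' where "P' = (\<Sum>j<v. beta_coeff s v j * (real j * u ^ (j - 1)))"
  have "((\<lambda>u. (1 + u) powr - e * beta_poly s v u) has_real_derivative
      - e * (1 + u) powr (- e - 1) * beta_poly s v u + P' * (1 + u) powr - e) (at u)"
    unfolding beta_poly_def P'_def using assms
    by (auto intro!: derivative_eq_intros simp: algebra_simps)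
  moreover have "- e * (1 + u) powr (- e - 1) * beta_poly s v u + P' * (1 + u) powr - e
      = (1 + u) powr - (s + real v) * ((1 + u) * P' - e * beta_poly s v u)"
  proof -
    have pw: "(1 + u) powr - e = (1 + u) powr (- e - 1) * (1 + u)"
      using powr_add[of "1 + u" "- e - 1" 1] assms by simp
    have m: "- e - 1 = - (s + real v)"
      by (simp add: e_def)
    show ?thesis
      unfolding pw m by (simp add: algebra_simps)
  qed
  ultimately show ?thesis
    unfolding e_def P'_def beta_poly_ode[OF assms(1)] by (simp add: mult_ac)
qed

lemma power_mult_powr_tendsto_0:
  fixes e :: real assumes "real j < e"
  shows "((\<lambda>u. u ^ j * (1 + u) powr - e) \<longlongrightarrow> 0) at_top"
proof -
  have "((\<lambda>u::real. u / (1 + u)) \<longlongrightarrow> 1) at_top" "filterlim (\<lambda>u::real. 1 + u) at_top at_top"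
    by real_asymp+
  then have "((\<lambda>u. (u / (1 + u)) ^ j * (1 + u) powr (real j - e)) \<longlongrightarrow> 1 ^ j * 0) at_top"
    using assms by (intro tendsto_intros tendsto_neg_powr) auto
  moreover have "\<forall>\<^sub>F u in at_top. (u / (1 + u)) ^ j * (1 + u) powr (real j - e) = u ^ j * (1 + u) powr - e"
    using eventually_gt_at_top[of 0]
  proof eventually_elim
    case (elim u)
    then show ?case
      by (simp add: powr_diff powr_minus powr_realpow divide_simps)
  qed
  ultimately show ?thesis
    by (simp add: tendsto_cong)
qed

lemma beta_integral_atLeast_0:
  fixes s c :: real and v :: nat
  assumes "0 < s" "0 < c" "1 \<le> v"
  shows "set_integrable lborel {0..} (\<lambda>t. t ^ (v - 1) * (1 + c * t) powr - (s + real v))"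
    and "(LINT t:{0..}|lborel. t ^ (v - 1) * (1 + c * t) powr - (s + real v))
      = Gamma (real v) * Gamma s / (Gamma (s + real v) * c ^ v)"
proof -
  define K where "K = real v * beta_coeff s v v"
  define \<Phi> where "\<Phi> u = (1 + u) powr - (s + real v - 1) * beta_poly s v u" for u
  define H where "H t = - \<Phi> (c * t) / (K * c ^ v)" for t
  have "0 < Gamma s" "0 < Gamma (real v)" "0 < Gamma (s + real v)"
    using assms by auto
  then have K: "K = Gamma (s + real v) / (Gamma (real v) * Gamma s)" "K \<noteq> 0"
    using mult_beta_coeff_self[OF assms(1,3)] by (auto simp: K_def)
  have deriv: "(H has_real_derivative t ^ (v - 1) * (1 + c * t) powr - (s + real v)) (at t)"
    if "0 \<le> t" for t
  proof -
    have "-1 < c * t"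
      using assms that by (smt (verit) mult_nonneg_nonneg)
    then have "(\<Phi> has_real_derivative - K * (c * t) ^ (v - 1) * (1 + c * t) powr - (s + real v)) (at (c * t))"
      unfolding \<Phi>_def K_def using assms by (intro has_real_derivative_beta_antideriv)
    then have "((\<lambda>t. \<Phi> (c * t)) has_real_derivative
        - K * (c * t) ^ (v - 1) * (1 + c * t) powr - (s + real v) * c) (at t)"
      by (rule DERIV_chain2) (auto intro!: derivative_eq_intros)
    then have "(H has_real_derivative
        - (- K * (c * t) ^ (v - 1) * (1 + c * t) powr - (s + real v) * c) / (K * c ^ v)) (at t)"
      unfolding H_def by (intro DERIV_cdivide DERIV_minus)
    moreover have "c ^ v = c ^ (v - 1) * c"
      using assms by (cases v) auto
    ultimately show ?thesis
      using K(2) assms by (simp add: power_mult_distrib field_simps)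
  qed
  have lim: "(H \<longlongrightarrow> 0) at_top"
  proof -
    have "((\<lambda>u. (1 + u) powr - (s + real v - 1) * u ^ j) \<longlongrightarrow> 0) at_top" if "j < v" for j
      using power_mult_powr_tendsto_0[of j "s + real v - 1"] that assms by (simp add: mult.commute)
    then have "(\<Phi> \<longlongrightarrow> 0) at_top"
      unfolding \<Phi>_def beta_poly_def sum_distrib_left
      by (intro tendsto_null_sum) (auto simp: mult.left_commute[of "_ powr _"] intro: tendsto_mult_right_zero)
    moreover have "filterlim (\<lambda>t. c * t) at_top at_top"
      using assms by (intro filterlim_tendsto_pos_mult_at_top[OF tendsto_const] filterlim_ident)
    ultimately have "((\<lambda>t. \<Phi> (c * t)) \<longlongrightarrow> 0) at_top"
      by (rule filterlim_compose)
    then have "((\<lambda>t. - \<Phi> (c * t)) \<longlongrightarrow> 0) at_top"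
      using tendsto_minus by fastforce
    then show ?thesis
      unfolding H_def by (rule tendsto_divide_zero)
  qed
  have H0: "H 0 = - 1 / (K * c ^ v)"
  proof -
    have "beta_poly s v 0 = beta_coeff s v 0"
      unfolding beta_poly_def using assms by (subst sum.remove[of _ 0]) auto
    moreover have "beta_coeff s v 0 = 1"
      using \<open>0 < Gamma (s + real v)\<close> by (simp add: beta_coeff_def)
    ultimately show ?thesis
      by (simp add: H_def \<Phi>_def)
  qed
  have "(\<lambda>t. t ^ (v - 1) * (1 + c * t) powr - (s + real v)) \<in> borel_measurable borel"
    by measurable
  note FTC = set_integral_FTC_atLeast[OF this deriv _ lim]
  show "set_integrable lborel {0..} (\<lambda>t. t ^ (v - 1) * (1 + c * t) powr - (s + real v))"
    by (rule FTC(1)) (auto intro!: mult_nonneg_nonneg)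
  show "(LINT t:{0..}|lborel. t ^ (v - 1) * (1 + c * t) powr - (s + real v))
      = Gamma (real v) * Gamma s / (Gamma (s + real v) * c ^ v)"
    using K by (subst FTC(2)) (simp_all add: H0)
qed

lemma p_kernel_nonneg:
  assumes "0 < c" "1 \<le> v" "0 \<le> t"
  shows "0 \<le> p_kernel n v c t"
proof (cases "n = 0")
  case False
  then have "0 < real n / c" using assms by simp
  then have "0 < Gamma (real n / c + real v - 1)" "0 < Gamma (real v)" "0 < Gamma (real n / c)"
    using assms by auto
  then show ?thesis
    using assms by (simp add: p_kernel_def)
qed (simp add: p_kernel_def) \<comment> \<open>for \<open>n = 0\<close> the normalising factor vanishes since \<open>Gamma 0 = 0\<close>\<close>

lemma p_kernel_moment:
  fixes c :: real and n v m :: nat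
  assumes "0 < c" "1 \<le> v" "real m < real n / c - 1"
  shows "set_integrable lborel {0..} (\<lambda>t. p_kernel n v c t * t ^ m)"
    and "(LINT t:{0..}|lborel. p_kernel n v c t * t ^ m)
      = Gamma (real (v + m)) * Gamma (real n / c - 1 - real m) / (Gamma (real v) * Gamma (real n / c) * c ^ m)"
proof -
  define S where "S = real n / c"
  define \<sigma> where "\<sigma> = S - 1 - real m"
  define A where "A = c * Gamma (S + real v - 1) / (Gamma (real v) * Gamma S) * c ^ (v - 1)"
  have \<sigma>: "0 < \<sigma>" "\<sigma> + real (v + m) = S + real v - 1"
    using assms by (simp_all add: \<sigma>_def S_def)
  have eq: "p_kernel n v c t * t ^ m = A * (t ^ (v + m - 1) * (1 + c * t) powr - (\<sigma> + real (v + m)))" for t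
  proof -
    have "t ^ (v - 1) * t ^ m = t ^ (v + m - 1)"
      using assms by (simp flip: power_add)
    then show ?thesis
      unfolding p_kernel_def A_def \<sigma>(2) S_def powr_minus_divide power_mult_distrib
      by (simp add: field_simps)
  qed
  have "1 \<le> v + m"
    using assms by simp
  note beta = beta_integral_atLeast_0[OF \<sigma>(1) assms(1) this]
  show "set_integrable lborel {0..} (\<lambda>t. p_kernel n v c t * t ^ m)"
    unfolding eq using beta(1) by (rule set_integrable_mult_right)
  have "(LINT t:{0..}|lborel. p_kernel n v c t * t ^ m)
      = A * (Gamma (real (v + m)) * Gamma \<sigma> / (Gamma (\<sigma> + real (v + m)) * c ^ (v + m)))"
    unfolding eq set_integral_mult_right beta(2) ..
  also have "\<dots> = Gamma (real (v + m)) * Gamma \<sigma> / (Gamma (real v) * Gamma S * c ^ m)"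
  proof -
    have "0 < Gamma (S + real v - 1)"
      using assms by (simp add: S_def)
    moreover have "c ^ (v + m) = c * c ^ (v - 1) * c ^ m"
      using assms by (cases v) (auto simp: power_add)
    ultimately show ?thesis
      unfolding \<sigma>(2) A_def using assms by (simp add: field_simps)
  qed
  finally show "(LINT t:{0..}|lborel. p_kernel n v c t * t ^ m)
      = Gamma (real (v + m)) * Gamma (real n / c - 1 - real m) / (Gamma (real v) * Gamma (real n / c) * c ^ m)"
    by (simp add: \<sigma>_def S_def)
qed

lemma p_kernel_integral:
  assumes "0 < c" "1 \<le> v" "c < real n"
  shows "set_integrable lborel {0..} (p_kernel n v c)"
    and "(LINT t:{0..}|lborel. p_kernel n v c t) = c / (real n - c)"
proof -
  define S where "S = real n / c"
  have S: "0 < S - 1"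
    using assms by (simp add: S_def field_simps)
  note moment = p_kernel_moment[OF assms(1,2), where n = n and m = 0, folded S_def]
  show "set_integrable lborel {0..} (p_kernel n v c)"
    using moment(1) S by simp
  have "0 < Gamma (S - 1)" "0 < Gamma (real v)"
    using assms S by auto
  then have "Gamma (S - 1) \<noteq> 0" "Gamma (real v) \<noteq> 0"
    by simp_all
  moreover have "Gamma S = (S - 1) * Gamma (S - 1)"
    using Gamma_plus1_pos[OF S] by simp
  ultimately have "(LINT t:{0..}|lborel. p_kernel n v c t) = 1 / (S - 1)"
    using moment(2) S by simp
  also have "\<dots> = c / (real n - c)"
    using assms by (simp add: S_def field_simps)
  finally show "(LINT t:{0..}|lborel. p_kernel n v c t) = c / (real n - c)" .
qed

lemma p_kernel_second_moment:
  assumes "0 < c" "1 \<le> v" "3 * c < real n"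
  shows "set_integrable lborel {0..} (\<lambda>t. p_kernel n v c t * t ^ 2)"
    and "(LINT t:{0..}|lborel. p_kernel n v c t * t ^ 2)
      = real v * real (v + 1) * c / ((real n - c) * (real n - 2 * c) * (real n - 3 * c))"
proof -
  define S where "S = real n / c"
  have S: "0 < S - 3"
    using assms by (simp add: S_def field_simps)
  note moment = p_kernel_moment[OF assms(1,2), where n = n and m = 2, folded S_def]
  show "set_integrable lborel {0..} (\<lambda>t. p_kernel n v c t * t ^ 2)"
    using moment(1) S by simp
  have "0 < Gamma (S - 3)" "0 < Gamma (real v)"
    using assms S by auto
  then have nonzero: "Gamma (S - 3) \<noteq> 0" "Gamma (real v) \<noteq> 0"
    by simp_all
  define P where "P = (S - 1) * (S - 2) * (S - 3)"
  have "0 < P"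
    using S by (simp add: P_def)
  have GS: "Gamma S = P * Gamma (S - 3)"
  proof -
    have "Gamma S = (S - 1) * Gamma (S - 1)"
      using Gamma_plus1_pos[of "S - 1"] S by simp
    also have "Gamma (S - 1) = (S - 2) * Gamma (S - 2)"
      using Gamma_plus1_pos[of "S - 2"] S by simp
    also have "Gamma (S - 2) = (S - 3) * Gamma (S - 3)"
      using Gamma_plus1_pos[of "S - 3"] S by simp
    finally show ?thesis
      by (simp add: P_def)
  qed
  have Gv: "Gamma (real (v + 2)) = real (v + 1) * real v * Gamma (real v)"
    using Gamma_plus1_pos[of "real v"] Gamma_plus1_pos[of "real v + 1"] assms by (simp add: algebra_simps)
  have "(LINT t:{0..}|lborel. p_kernel n v c t * t ^ 2)
      = Gamma (real (v + 2)) * Gamma (S - 3) / (Gamma (real v) * Gamma S * c ^ 2)"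
    using moment(2) S by simp
  also have "\<dots> = real (v + 1) * real v / (P * c ^ 2)"
    unfolding GS Gv using \<open>0 < P\<close> assms nonzero by (simp add: field_simps)
  also have "\<dots> = real v * real (v + 1) * c / (P * c ^ 3)"
    using assms by (simp add: power2_eq_square power3_eq_cube)
  also have "P * c ^ 3 = ((S - 1) * c) * ((S - 2) * c) * ((S - 3) * c)"
    by (simp add: P_def power3_eq_cube)
  also have "\<dots> = (real n - c) * (real n - 2 * c) * (real n - 3 * c)"
    using assms by (simp add: S_def left_diff_distrib)
  finally show "(LINT t:{0..}|lborel. p_kernel n v c t * t ^ 2)
      = real v * real (v + 1) * c / ((real n - c) * (real n - 2 * c) * (real n - 3 * c))" .
qed

section \<open>The operator as a positive linear functional\<close>

lemma C_rho0_affine: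
  assumes "g \<in> C_rho0"
  shows "(\<lambda>t. \<alpha> * g t + \<gamma>) \<in> C_rho0"
proof -
  obtain M L where M: "\<forall>x\<ge>0. \<bar>g x\<bar> \<le> M * (1 + x^2)" and cont: "continuous_on {0..} g"
    and L: "((\<lambda>x. g x / (1 + x^2)) \<longlongrightarrow> L) at_top"
    using assms by (auto simp: C_rho0_def B_rho0_def)
  have "\<bar>\<alpha> * g x + \<gamma>\<bar> \<le> (\<bar>\<alpha>\<bar> * M + \<bar>\<gamma>\<bar>) * (1 + x^2)" if "0 \<le> x" for x
  proof -
    have "\<bar>\<alpha> * g x + \<gamma>\<bar> \<le> \<bar>\<alpha>\<bar> * \<bar>g x\<bar> + \<bar>\<gamma>\<bar> * 1"
      by (simp add: abs_mult abs_triangle_ineq[THEN order_trans])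
    also have "\<dots> \<le> \<bar>\<alpha>\<bar> * (M * (1 + x^2)) + \<bar>\<gamma>\<bar> * (1 + x^2)"
      using M that by (intro add_mono mult_left_mono) auto
    finally show ?thesis
      by (simp add: algebra_simps)
  qed
  moreover have "((\<lambda>x. (\<alpha> * g x + \<gamma>) / (1 + x^2)) \<longlongrightarrow> \<alpha> * L + \<gamma> * 0) at_top"
  proof -
    have "((\<lambda>x::real. 1 / (1 + x^2)) \<longlongrightarrow> 0) at_top"
      by real_asymp
    then have "((\<lambda>x. \<alpha> * (g x / (1 + x^2)) + \<gamma> * (1 / (1 + x^2))) \<longlongrightarrow> \<alpha> * L + \<gamma> * 0) at_top"
      by (intro tendsto_intros L)
    then show ?thesis
      by (simp add: add_divide_distrib)
  qed
  ultimately show ?thesis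
    using cont by (auto simp: C_rho0_def B_rho0_def intro!: continuous_intros)
qed

lemma C_rho0_square_diff: "(\<lambda>t. (t - x)^2) \<in> C_rho0"
proof -
  have "(t - x)^2 \<le> (2 + 2 * x^2) * (1 + t^2)" for t
  proof -
    have "(t - x)^2 \<le> 2 * t^2 + 2 * x^2"
      using zero_le_power2[of "t + x"] by (simp add: power2_eq_square algebra_simps)
    also have "\<dots> \<le> (2 + 2 * x^2) * (1 + t^2)"
      by (simp add: algebra_simps)
    finally show ?thesis .
  qed
  moreover have "((\<lambda>t. (t - x)^2 / (1 + t^2)) \<longlongrightarrow> 1) at_top"
    by real_asymp
  ultimately show ?thesis
    by (auto simp: C_rho0_def B_rho0_def intro!: continuous_intros)
qed

context
  fixes n :: nat and c \<beta> :: real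
  assumes c_pos: "0 < c" and n_gt: "3 * c < real n" and \<beta>_nonneg: "0 \<le> \<beta>" and \<beta>_less: "\<beta> < 1"
begin

lemma set_integrable_p_kernel_C_rho0:
  assumes "g \<in> C_rho0" "1 \<le> v"
  shows "set_integrable lborel {0..} (\<lambda>t. p_kernel n v c t * g t)"
proof -
  obtain M where M: "\<forall>t\<ge>0. \<bar>g t\<bar> \<le> M * (1 + t^2)" and cont: "continuous_on {0..} g"
    using assms by (auto simp: C_rho0_def B_rho0_def)
  have majorant: "set_integrable lborel {0..} (\<lambda>t. M * (p_kernel n v c t + p_kernel n v c t * t^2))"
    using p_kernel_integral(1)[OF c_pos assms(2)] p_kernel_second_moment(1)[OF c_pos assms(2) n_gt] n_gt c_pos
    by (intro set_integrable_mult_right set_integral_add) auto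
  have measurable: "set_borel_measurable lborel {0..} (\<lambda>t. p_kernel n v c t * g t)"
  proof -
    have "(\<lambda>t. indicator {0..} t *\<^sub>R g t) \<in> borel_measurable borel"
      using cont by (intro borel_measurable_continuous_on_indicator) auto
    moreover have "p_kernel n v c \<in> borel_measurable borel"
      unfolding p_kernel_def by measurable
    moreover have "(\<lambda>t. indicator {0..} t *\<^sub>R (p_kernel n v c t * g t))
        = (\<lambda>t. p_kernel n v c t * (indicator {0..} t *\<^sub>R g t))"
      by (auto simp: fun_eq_iff indicator_def)
    ultimately show ?thesis
      unfolding set_borel_measurable_def by simp
  qed
  have bound: "norm (p_kernel n v c t * g t) \<le> norm (M * (p_kernel n v c t + p_kernel n v c t * t^2))"
    if "0 \<le> t" for t
  proof -
    have "norm (p_kernel n v c t * g t) = p_kernel n v c t * \<bar>g t\<bar>"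
      using p_kernel_nonneg[OF c_pos assms(2) that] by (simp add: abs_mult)
    also have "\<dots> \<le> p_kernel n v c t * (M * (1 + t^2))"
      using M that p_kernel_nonneg[OF c_pos assms(2) that] by (intro mult_left_mono) auto
    finally show ?thesis
      by (simp add: algebra_simps)
  qed
  show ?thesis
    using bound by (intro set_integrable_bound[OF majorant measurable] AE_I2) simp
qed


lemma abs_p_kernel_integral_le:
  assumes "g \<in> C_rho0" "1 \<le> v" "\<forall>t\<ge>0. \<bar>g t\<bar> \<le> M * (1 + t^2)"
  shows "\<bar>LINT t:{0..}|lborel. p_kernel n v c t * g t\<bar>
    \<le> M * (c / (real n - c) + real v * real (v + 1) * c / ((real n - c) * (real n - 2 * c) * (real n - 3 * c)))"
proof -
  note p0 = p_kernel_integral[OF c_pos assms(2)] and p2 = p_kernel_second_moment[OF c_pos assms(2) n_gt]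
  have "c < real n"
    using c_pos n_gt by simp
  have "\<bar>LINT t:{0..}|lborel. p_kernel n v c t * g t\<bar> \<le> (LINT t:{0..}|lborel. norm (p_kernel n v c t * g t))"
    using set_integral_norm_bound[OF set_integrable_p_kernel_C_rho0[OF assms(1,2)]] by simp
  also have "\<dots> \<le> (LINT t:{0..}|lborel. M * (p_kernel n v c t + p_kernel n v c t * t^2))"
  proof (rule set_integral_mono)
    show "set_integrable lborel {0..} (\<lambda>t. M * (p_kernel n v c t + p_kernel n v c t * t^2))"
      using p0(1) p2(1) \<open>c < real n\<close> by (intro set_integrable_mult_right set_integral_add) auto
    fix t :: real assume "t \<in> {0..}"
    then have "0 \<le> t" by simp
    have "norm (p_kernel n v c t * g t) = p_kernel n v c t * \<bar>g t\<bar>"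
      using p_kernel_nonneg[OF c_pos assms(2) \<open>0 \<le> t\<close>] by (simp add: abs_mult)
    also have "\<dots> \<le> p_kernel n v c t * (M * (1 + t^2))"
      using assms(3) \<open>0 \<le> t\<close> p_kernel_nonneg[OF c_pos assms(2) \<open>0 \<le> t\<close>] by (intro mult_left_mono) auto
    finally show "norm (p_kernel n v c t * g t) \<le> M * (p_kernel n v c t + p_kernel n v c t * t^2)"
      by (simp add: algebra_simps)
  qed (use set_integrable_norm[OF set_integrable_p_kernel_C_rho0[OF assms(1,2)]] in simp)
  also have "\<dots> = M * (c / (real n - c) + real v * real (v + 1) * c / ((real n - c) * (real n - 2 * c) * (real n - 3 * c)))"
    using p0 p2 \<open>c < real n\<close> by simp
  finally show ?thesis .
qed

lemma summable_jain_baskakov_series: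
  assumes "g \<in> C_rho0" "0 \<le> y"
  shows "summable (\<lambda>k. omega_beta \<beta> (Suc k) y * (LINT t:{0..}|lborel. p_kernel n (Suc k) c t * g t))"
proof -
  obtain M where M: "\<forall>t\<ge>0. \<bar>g t\<bar> \<le> M * (1 + t^2)"
    using assms by (auto simp: C_rho0_def B_rho0_def)
  define A where "A = M * (c / (real n - c))"
  define B where "B = M * (c / ((real n - c) * (real n - 2 * c) * (real n - 3 * c)))"
  show ?thesis
  proof (rule summable_comparison_test')
    show "summable (\<lambda>k. A * omega_beta \<beta> (Suc k) y + B * (omega_beta \<beta> (Suc k) y * (real (Suc k) * real (Suc k + 1))))"
      using omega_beta_sums[OF \<beta>_nonneg \<beta>_less assms(2)]
        summable_omega_beta_second_moment[OF \<beta>_nonneg \<beta>_less assms(2)]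
      by (intro summable_add summable_mult sums_summable) auto
    fix k
    have "\<bar>LINT t:{0..}|lborel. p_kernel n (Suc k) c t * g t\<bar> \<le> A + B * (real (Suc k) * real (Suc k + 1))"
      using abs_p_kernel_integral_le[OF assms(1) _ M, of "Suc k"] by (simp add: A_def B_def algebra_simps)
    then have "omega_beta \<beta> (Suc k) y * \<bar>LINT t:{0..}|lborel. p_kernel n (Suc k) c t * g t\<bar>
        \<le> omega_beta \<beta> (Suc k) y * (A + B * (real (Suc k) * real (Suc k + 1)))"
      using omega_beta_nonneg[OF \<beta>_nonneg assms(2)] by (rule mult_left_mono)
    then show "norm (omega_beta \<beta> (Suc k) y * (LINT t:{0..}|lborel. p_kernel n (Suc k) c t * g t))
        \<le> A * omega_beta \<beta> (Suc k) y + B * (omega_beta \<beta> (Suc k) y * (real (Suc k) * real (Suc k + 1)))"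
      using omega_beta_nonneg[OF \<beta>_nonneg assms(2), of k] by (simp add: abs_mult algebra_simps)
  qed
qed


lemma jain_baskakov_affine:
  assumes "g \<in> C_rho0" "0 \<le> x"
  shows "jain_baskakov n c \<beta> (\<lambda>t. \<alpha> * g t + \<gamma>) x = \<alpha> * jain_baskakov n c \<beta> g x + \<gamma>"
proof -
  define y where "y = real n * x"
  define I where "I k = (LINT t:{0..}|lborel. p_kernel n (Suc k) c t * g t)" for k
  define \<Sigma> where "\<Sigma> = (\<Sum>k. omega_beta \<beta> (Suc k) y * I k)"
  have "0 \<le> y" "c < real n"
    using assms c_pos n_gt by (simp_all add: y_def)
  have "(LINT t:{0..}|lborel. p_kernel n (Suc k) c t * (\<alpha> * g t + \<gamma>)) = \<alpha> * I k + \<gamma> * (c / (real n - c))" for k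
  proof -
    have "(\<lambda>t. p_kernel n (Suc k) c t * (\<alpha> * g t + \<gamma>)) = (\<lambda>t. \<alpha> * (p_kernel n (Suc k) c t * g t) + \<gamma> * p_kernel n (Suc k) c t)"
      by (simp add: fun_eq_iff algebra_simps)
    then show ?thesis
      using set_integrable_p_kernel_C_rho0[OF assms(1), of "Suc k"] p_kernel_integral[OF c_pos _ \<open>c < real n\<close>, of "Suc k"]
      by (simp add: I_def)
  qed
  moreover have "(\<lambda>k. \<alpha> * (omega_beta \<beta> (Suc k) y * I k) + omega_beta \<beta> (Suc k) y * (\<gamma> * (c / (real n - c))))
      sums (\<alpha> * \<Sigma> + (1 - exp (- y)) * (\<gamma> * (c / (real n - c))))"
    using summable_jain_baskakov_series[OF assms(1) \<open>0 \<le> y\<close>] omega_beta_sums[OF \<beta>_nonneg \<beta>_less \<open>0 \<le> y\<close>]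
    unfolding \<Sigma>_def I_def by (intro sums_add sums_mult sums_mult2 summable_sums)
  ultimately have "(\<Sum>k. omega_beta \<beta> (Suc k) y * (LINT t:{0..}|lborel. p_kernel n (Suc k) c t * (\<alpha> * g t + \<gamma>)))
      = \<alpha> * \<Sigma> + (1 - exp (- y)) * (\<gamma> * (c / (real n - c)))"
    by (simp add: sums_iff algebra_simps)
  then show ?thesis
    using \<open>c < real n\<close> c_pos
    by (simp add: jain_baskakov_def \<Sigma>_def I_def y_def field_simps)
qed


lemma jain_baskakov_mono:
  assumes "g \<in> C_rho0" "h \<in> C_rho0" "0 \<le> x" "\<And>t. 0 \<le> t \<Longrightarrow> g t \<le> h t"
  shows "jain_baskakov n c \<beta> g x \<le> jain_baskakov n c \<beta> h x"
proof -
  have "0 \<le> real n * x" "c < real n"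
    using assms c_pos n_gt by simp_all
  have "(LINT t:{0..}|lborel. p_kernel n (Suc k) c t * g t) \<le> (LINT t:{0..}|lborel. p_kernel n (Suc k) c t * h t)" for k
    using assms(4) p_kernel_nonneg[OF c_pos]
    by (intro set_integral_mono set_integrable_p_kernel_C_rho0 assms(1,2) mult_left_mono) auto
  then have "(\<Sum>k. omega_beta \<beta> (Suc k) (real n * x) * (LINT t:{0..}|lborel. p_kernel n (Suc k) c t * g t))
      \<le> (\<Sum>k. omega_beta \<beta> (Suc k) (real n * x) * (LINT t:{0..}|lborel. p_kernel n (Suc k) c t * h t))"
    using omega_beta_nonneg[OF \<beta>_nonneg \<open>0 \<le> real n * x\<close>]
    by (intro suminf_le summable_jain_baskakov_series assms(1,2) \<open>0 \<le> real n * x\<close> mult_left_mono) auto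
  then show ?thesis
    unfolding jain_baskakov_def using assms(4)[of 0] \<open>c < real n\<close> c_pos
    by (intro add_mono mult_left_mono) auto
qed

lemma jain_baskakov_abs_le:
  assumes "g \<in> C_rho0" "h \<in> C_rho0" "0 \<le> x" "\<And>t. 0 \<le> t \<Longrightarrow> \<bar>g t\<bar> \<le> h t"
  shows "\<bar>jain_baskakov n c \<beta> g x\<bar> \<le> jain_baskakov n c \<beta> h x"
proof -
  have bounds: "g t \<le> h t" "- 1 * h t + 0 \<le> g t" if "0 \<le> t" for t
    using assms(4)[OF that] by auto
  have "jain_baskakov n c \<beta> (\<lambda>t. - 1 * h t + 0) x \<le> jain_baskakov n c \<beta> g x"
    using assms(1-3) bounds(2) by (intro jain_baskakov_mono C_rho0_affine)
  then have "- jain_baskakov n c \<beta> h x \<le> jain_baskakov n c \<beta> g x"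
    using jain_baskakov_affine[OF assms(2,3), of "- 1" 0] by simp
  moreover have "jain_baskakov n c \<beta> g x \<le> jain_baskakov n c \<beta> h x"
    using assms(1-3) bounds(1) by (intro jain_baskakov_mono)
  ultimately show ?thesis
    by linarith
qed

lemma abs_jain_baskakov_diff_le:
  assumes "f \<in> C_rho0" "0 \<le> x" "\<And>t. 0 \<le> t \<Longrightarrow> \<bar>f t - f x\<bar> \<le> \<alpha> * (t - x)^2 + \<gamma>"
  shows "\<bar>jain_baskakov n c \<beta> f x - f x\<bar> \<le> \<alpha> * mu2 n c \<beta> x + \<gamma>"
proof -
  have "jain_baskakov n c \<beta> f x - f x = jain_baskakov n c \<beta> (\<lambda>t. 1 * f t + - f x) x"
    using jain_baskakov_affine[OF assms(1,2), of 1 "- f x"] by simp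
  also have "\<bar>\<dots>\<bar> \<le> jain_baskakov n c \<beta> (\<lambda>t. \<alpha> * (t - x)^2 + \<gamma>) x"
    using assms by (intro jain_baskakov_abs_le C_rho0_affine C_rho0_square_diff) auto
  also have "\<dots> = \<alpha> * mu2 n c \<beta> x + \<gamma>"
    unfolding mu2_def by (rule jain_baskakov_affine[OF C_rho0_square_diff assms(2)])
  finally show ?thesis .
qed

lemma mu2_pos:
  assumes "0 < x"
  shows "0 < mu2 n c \<beta> x"
proof -
  have "0 \<le> real n * x" "c < real n"
    using assms c_pos n_gt by simp_all
  have "0 \<le> (LINT t:{0..}|lborel. p_kernel n (Suc k) c t * (t - x)^2)" for k
    unfolding set_lebesgue_integral_def using p_kernel_nonneg[OF c_pos]
    by (intro integral_nonneg_AE AE_I2) (auto simp: indicator_def)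
  then have "0 \<le> (\<Sum>k. omega_beta \<beta> (Suc k) (real n * x) * (LINT t:{0..}|lborel. p_kernel n (Suc k) c t * (t - x)^2))"
    using omega_beta_nonneg[OF \<beta>_nonneg \<open>0 \<le> real n * x\<close>]
    by (intro suminf_nonneg summable_jain_baskakov_series C_rho0_square_diff \<open>0 \<le> real n * x\<close>
        mult_nonneg_nonneg)
  then show ?thesis
    unfolding mu2_def jain_baskakov_def using assms \<open>c < real n\<close> c_pos
    by (intro add_nonneg_pos mult_nonneg_nonneg) auto
qed

end

lemma jain_baskakov_at_0: "jain_baskakov n c \<beta> g 0 = g 0"
  by (simp add: jain_baskakov_def omega_beta_def)

section \<open>Modulus of continuity\<close>

lemma bdd_above_modulus_cont:
  fixes f :: "real \<Rightarrow> real"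
  assumes "continuous_on {0..b} f"
  shows "bdd_above {\<bar>f t - f x\<bar> | x t. x \<in> {0..b} \<and> t \<in> {0..b} \<and> \<bar>t - x\<bar> \<le> \<delta>}"
proof -
  have "bounded (f ` {0..b})"
    by (intro compact_imp_bounded compact_continuous_image assms compact_Icc)
  then obtain B where B: "\<And>x. x \<in> {0..b} \<Longrightarrow> \<bar>f x\<bar> \<le> B"
    unfolding bounded_iff real_norm_def by (meson imageI)
  show ?thesis
  proof (rule bdd_aboveI[where M = "2 * B"], clarify)
    fix x t assume "x \<in> {0..b}" "t \<in> {0..b}"
    then show "\<bar>f t - f x\<bar> \<le> 2 * B"
      using B[of x] B[of t] by linarith
  qed
qed

lemma abs_diff_le_modulus_cont:
  fixes f :: "real \<Rightarrow> real"
  assumes "continuous_on {0..b} f" "x \<in> {0..b}" "t \<in> {0..b}" "\<bar>t - x\<bar> \<le> \<delta>"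
  shows "\<bar>f t - f x\<bar> \<le> modulus_cont b f \<delta>"
  unfolding modulus_cont_def using assms by (intro cSup_upper bdd_above_modulus_cont) blast+

lemma modulus_cont_nonneg:
  fixes f :: "real \<Rightarrow> real"
  assumes "continuous_on {0..b} f" "0 \<le> b" "0 \<le> \<delta>"
  shows "0 \<le> modulus_cont b f \<delta>"
  using abs_diff_le_modulus_cont[OF assms(1), of 0 0 \<delta>] assms by simp

lemma abs_diff_le_mult_modulus_cont:
  fixes f :: "real \<Rightarrow> real"
  assumes "continuous_on {0..b} f" "0 < \<delta>" "x \<in> {0..b}" "t \<in> {0..b}" "\<bar>t - x\<bar> \<le> real (Suc j) * \<delta>"
  shows "\<bar>f t - f x\<bar> \<le> real (Suc j) * modulus_cont b f \<delta>"
  using assms(3-5)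
proof (induction j arbitrary: x)
  case 0
  then show ?case
    using abs_diff_le_modulus_cont[OF assms(1)] by simp
next
  case (Suc j)
  have "0 \<le> modulus_cont b f \<delta>"
    using modulus_cont_nonneg[OF assms(1)] Suc.prems assms(2) by auto
  show ?case
  proof (cases "\<bar>t - x\<bar> \<le> \<delta>")
    case True
    then have "\<bar>f t - f x\<bar> \<le> modulus_cont b f \<delta>"
      using abs_diff_le_modulus_cont[OF assms(1)] Suc.prems by blast
    moreover have "0 \<le> real (Suc j) * modulus_cont b f \<delta>"
      using \<open>0 \<le> modulus_cont b f \<delta>\<close> by simp
    moreover have "real (Suc (Suc j)) * modulus_cont b f \<delta> = real (Suc j) * modulus_cont b f \<delta> + modulus_cont b f \<delta>"
      by (simp add: algebra_simps)
    ultimately show ?thesis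
      by linarith
  next
    case False
    define s where "s = (if x \<le> t then x + \<delta> else x - \<delta>)"
    have s: "s \<in> {0..b}" "\<bar>s - x\<bar> \<le> \<delta>" "\<bar>t - s\<bar> \<le> real (Suc j) * \<delta>"
      using Suc.prems False assms(2) by (auto simp: s_def algebra_simps split: if_splits)
    have "\<bar>f t - f x\<bar> \<le> \<bar>f t - f s\<bar> + \<bar>f s - f x\<bar>"
      by linarith
    also have "\<dots> \<le> real (Suc j) * modulus_cont b f \<delta> + modulus_cont b f \<delta>"
      using Suc.IH[OF s(1) Suc.prems(2) s(3)] abs_diff_le_modulus_cont[OF assms(1) Suc.prems(1) s(1,2)]
      by (rule add_mono)
    finally show ?thesis
      by (simp add: algebra_simps)
  qed
qed

lemma abs_diff_le_modulus_cont_quadratic: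
  fixes f :: "real \<Rightarrow> real"
  assumes "continuous_on {0..b} f" "0 < \<delta>" "x \<in> {0..b}" "t \<in> {0..b}"
  shows "\<bar>f t - f x\<bar> \<le> (1 + (t - x)^2 / \<delta>^2) * modulus_cont b f \<delta>"
proof -
  define l where "l = \<bar>t - x\<bar> / \<delta>"
  have "0 \<le> modulus_cont b f \<delta>"
    using modulus_cont_nonneg[OF assms(1)] assms by auto
  have l2: "l^2 = (t - x)^2 / \<delta>^2"
    by (simp add: l_def power_divide)
  show ?thesis
  proof (cases "l \<le> 1")
    case True
    then have "\<bar>f t - f x\<bar> \<le> modulus_cont b f \<delta>"
      using assms by (intro abs_diff_le_modulus_cont) (auto simp: l_def field_simps)
    moreover have "modulus_cont b f \<delta> \<le> (1 + (t - x)^2 / \<delta>^2) * modulus_cont b f \<delta>"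
      using mult_right_mono[OF _ \<open>0 \<le> modulus_cont b f \<delta>\<close>, of 1] by simp
    ultimately show ?thesis
      by linarith
  next
    case False
    define j where "j = nat \<lceil>l\<rceil> - 1"
    have j: "real (Suc j) = of_int \<lceil>l\<rceil>"
      using False by (simp add: j_def)
    have "\<bar>t - x\<bar> = l * \<delta>"
      using assms(2) by (simp add: l_def)
    also have "\<dots> \<le> real (Suc j) * \<delta>"
      unfolding j using assms(2) by (intro mult_right_mono) auto
    finally have "\<bar>f t - f x\<bar> \<le> real (Suc j) * modulus_cont b f \<delta>"
      using assms by (intro abs_diff_le_mult_modulus_cont)
    also have "\<dots> \<le> (1 + l^2) * modulus_cont b f \<delta>"
    proof (rule mult_right_mono)
      have "real (Suc j) \<le> l + 1"
        unfolding j by linarith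
      also have "l \<le> l^2"
        using False by (simp add: power2_eq_square)
      finally show "real (Suc j) \<le> 1 + l^2"
        by simp
    qed fact
    finally show ?thesis
      unfolding l2 .
  qed
qed

lemma abs_diff_le_quadratic_growth:
  fixes f :: "real \<Rightarrow> real"
  assumes growth: "\<forall>y\<ge>0. \<bar>f y\<bar> \<le> M * (1 + y^2)"
    and "x \<in> {0..a}" "0 \<le> t" "1 \<le> \<bar>t - x\<bar>"
  shows "\<bar>f t - f x\<bar> \<le> 6 * M * (1 + a^2) * (t - x)^2"
proof -
  define e where "e = t - x"
  have "0 \<le> M"
    using growth by force
  have "1 \<le> e^2"
    using one_le_power[OF assms(4), of 2] by (simp add: e_def)
  have "x^2 \<le> a^2"
    using assms(2) by (intro power_mono) auto
  have "t^2 \<le> 2 * x^2 + 2 * e^2"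
    using zero_le_power2[of "x - e"] by (simp add: e_def power2_eq_square algebra_simps)
  have "a^2 \<le> a^2 * e^2"
    using mult_left_mono[OF \<open>1 \<le> e^2\<close>, of "a^2"] by simp
  have "\<bar>f t\<bar> \<le> M * (1 + t^2)" "\<bar>f x\<bar> \<le> M * (1 + x^2)"
    using growth assms(2,3) by auto
  then have "\<bar>f t - f x\<bar> \<le> M * (1 + t^2) + M * (1 + x^2)"
    by linarith
  also have "\<dots> = M * (2 + t^2 + x^2)"
    by (simp add: algebra_simps)
  also have "\<dots> \<le> M * (6 * (1 + a^2) * e^2)"
  proof (rule mult_left_mono[OF _ \<open>0 \<le> M\<close>])
    show "2 + t^2 + x^2 \<le> 6 * (1 + a^2) * e^2"
    proof -
      have "6 * (1 + a^2) * e^2 = 6 * e^2 + 6 * (a^2 * e^2)"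
        by (simp add: algebra_simps)
      then show ?thesis
        using \<open>1 \<le> e^2\<close> \<open>x^2 \<le> a^2\<close> \<open>t^2 \<le> 2 * x^2 + 2 * e^2\<close> \<open>a^2 \<le> a^2 * e^2\<close>
          zero_le_power2[of a] by linarith
    qed
  qed
  finally show ?thesis
    by (simp add: e_def algebra_simps)
qed

lemma abs_diff_le_modulus_quadratic_bound:
  fixes f :: "real \<Rightarrow> real"
  assumes growth: "\<forall>y\<ge>0. \<bar>f y\<bar> \<le> M * (1 + y^2)"
    and cont: "continuous_on {0..a + 1} f" and "0 < \<delta>" "x \<in> {0..a}" "0 \<le> t"
  shows "\<bar>f t - f x\<bar> \<le> 6 * M * (1 + a^2) * (t - x)^2 + (1 + (t - x)^2 / \<delta>^2) * modulus_cont (a + 1) f \<delta>"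
proof (cases "t \<le> a + 1")
  case True
  have "0 \<le> M"
    using growth by force
  then have "0 \<le> 6 * M * (1 + a^2) * (t - x)^2"
    by simp
  moreover have "\<bar>f t - f x\<bar> \<le> (1 + (t - x)^2 / \<delta>^2) * modulus_cont (a + 1) f \<delta>"
    using assms True by (intro abs_diff_le_modulus_cont_quadratic) auto
  ultimately show ?thesis
    by linarith
next
  case False
  have "0 \<le> (1 + (t - x)^2 / \<delta>^2) * modulus_cont (a + 1) f \<delta>"
    using assms modulus_cont_nonneg[OF cont] by simp
  moreover have "\<bar>f t - f x\<bar> \<le> 6 * M * (1 + a^2) * (t - x)^2"
    using assms False by (intro abs_diff_le_quadratic_growth) auto
  ultimately show ?thesis
    by linarith
qed

theorem theorem2:
  fixes c \<beta> a M :: real and n :: nat and f :: "real \<Rightarrow> real" and x :: real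
  assumes "c > 0" and "0 \<le> \<beta>" and "\<beta> < 1" and "a > 0"
    and "real n > 3 * c"
    and "f \<in> C_rho0"
    and "\<forall>y\<ge>0. \<bar>f y\<bar> \<le> M * (1 + y^2)"
    and "x \<in> {0..a}"
  shows "\<bar>jain_baskakov n c \<beta> f x - f x\<bar>
           \<le> 6 * M * (1 + a^2) * mu2 n c \<beta> x
             + 2 * modulus_cont (a + 1) f (sqrt (mu2 n c \<beta> x))"
proof -
  have cont: "continuous_on {0..a + 1} f"
    using assms(6) by (auto simp: C_rho0_def intro: continuous_on_subset)
  define \<mu> where "\<mu> = mu2 n c \<beta> x"
  define w where "w = modulus_cont (a + 1) f (sqrt \<mu>)"
  define A where "A = 6 * M * (1 + a^2)"
  show ?thesis
  proof (cases "x = 0")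
    case True
    then have "\<mu> = 0"
      by (simp add: \<mu>_def mu2_def jain_baskakov_at_0)
    moreover have "jain_baskakov n c \<beta> f x = f x"
      using True by (simp add: jain_baskakov_at_0)
    ultimately show ?thesis
      unfolding \<mu>_def[symmetric] using modulus_cont_nonneg[OF cont] assms(4) by simp
  next
    case False
    then have "0 < \<mu>" "0 \<le> x"
      using mu2_pos[OF assms(1,5,2,3)] assms(8) by (auto simp: \<mu>_def)
    have "\<bar>f t - f x\<bar> \<le> (A + w / \<mu>) * (t - x)^2 + w" if "0 \<le> t" for t
      using abs_diff_le_modulus_quadratic_bound[OF assms(7) cont _ assms(8) that, of "sqrt \<mu>"] \<open>0 < \<mu>\<close>
      by (simp add: A_def w_def algebra_simps)
    then have "\<bar>jain_baskakov n c \<beta> f x - f x\<bar> \<le> (A + w / \<mu>) * \<mu> + w"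
      unfolding \<mu>_def by (intro abs_jain_baskakov_diff_le[OF assms(1,5,2,3,6) \<open>0 \<le> x\<close>])
    also have "\<dots> = A * \<mu> + 2 * w"
      using \<open>0 < \<mu>\<close> by (simp add: field_simps)
    finally show ?thesis
      by (simp add: A_def w_def \<mu>_def)
  qed
qed

end
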